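(* Let $\mathcal{L}$ be a finite algebraic language and $\mathcal{V}$ an equational class of $\mathcal{L}$-algebras. If an $\mathcal{L}$-clause $\Sigma\Rightarrow\Delta$ is $\mathcal{V}$-admissible and $S$ is a finite complete set for $\mathsf{E}_{\mathcal{V}}(\Sigma,\mathrm{Var}(\Sigma\cup\Delta))$, then there exists $\Delta'\subseteq\Delta$ such that $|\Delta'|\le|S|$ and $\Sigma\Rightarrow\Delta'$ is $\mathcal{V}$-admissible.
   Context: An $\mathcal{L}$-clause $\Sigma\Rightarrow\Delta$ is a pair of finite sets of $\mathcal{L}$-identities. $\mathbf{Fm}_{\mathcal{L}}(Y)$ is the formula algebra over variables $Y$ ($\omega$ = all variables); $\mathrm{Var}(\Gamma)$ is the set of variables occurring in $\Gamma$; substitutions are homomorphisms of formula algebras. A substitution $\sigma\colon\mathbf{Fm}_{\mathcal{L}}(X)\to\mathbf{Fm}_{\mathcal{L}}(\omega)$ is a $\mathcal{V}$-unifier (over $X$) of $\Gamma$ with $\mathrm{Var}(\Gamma)\subseteq X$ if $\mathcal{V}\models\sigma(\varphi)\approx\sigma(\psi)$ for all $\varphi\approx\psi\in\Gamma$. $\Sigma\Rightarrow\Delta$ is $\mathcal{V}$-admissible if every substitution $\sigma\colon\mathbf{Fm}_{\mathcal{L}}(\mathrm{Var}(\Sigma\cup\Delta))\to\mathbf{Fm}_{\mathcal{L}}(\omega)$ that $\mathcal{V}$-unifies $\Sigma$ also $\mathcal{V}$-unifies some member of $\Delta$. $h_{\mathcal{V}}$ is the canonical homomorphism from $\mathbf{Fm}_{\mathcal{L}}(Y)$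 onto the free algebra $\mathbf{F}_{\mathcal{V}}(Y)$ ($h_{\mathcal{V}}(\varphi)=h_{\mathcal{V}}(\psi)$ iff $\mathcal{V}\models\varphi\approx\psi$). For substitutions over $X$, $\sigma_2\sqsubseteq_{\mathcal{V}}\sigma_1$ iff $\ker(h_{\mathcal{V}}\circ\sigma_1)\subseteq\ker(h_{\mathcal{V}}\circ\sigma_2)$. $\mathsf{E}_{\mathcal{V}}(\Sigma,X)$ is the set of $\mathcal{V}$-unifiers of $\Sigma$ over $X$ preordered by $\sqsubseteq_{\mathcal{V}}$. A complete set for a preordered set $(P,\le)$ is $M\subseteq P$ such that every $x\in P$ has some $y\in M$ with $x\le y$. *)

theory Defs
  imports Main
begin

text \<open>An algebraic language is given by a type of function symbols 'f together with an
  arity function. Variables are natural numbers (omega = all variables).\<close>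

datatype 'f trm = Var nat | Fun 'f "'f trm list"

fun vars_trm :: "'f trm \<Rightarrow> nat set" where
  "vars_trm (Var x) = {x}"
| "vars_trm (Fun f ts) = (\<Union>t\<in>set ts. vars_trm t)"

fun wf_trm :: "('f \<Rightarrow> nat) \<Rightarrow> 'f trm \<Rightarrow> bool" where
  "wf_trm ar (Var x) = True"
| "wf_trm ar (Fun f ts) = (length ts = ar f \<and> (\<forall>t\<in>set ts. wf_trm ar t))"

definition Fm :: "('f \<Rightarrow> nat) \<Rightarrow> nat set \<Rightarrow> 'f trm set" where
  "Fm ar Y = {t. wf_trm ar t \<and> vars_trm t \<subseteq> Y}"

fun subst :: "(nat \<Rightarrow> 'f trm) \<Rightarrow> 'f trm \<Rightarrow> 'f trm" where
  "subst \<sigma> (Var x) = \<sigma> x"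
| "subst \<sigma> (Fun f ts) = Fun f (map (subst \<sigma>) ts)"

definition Vars :: "('f trm \<times> 'f trm) set \<Rightarrow> nat set" where
  "Vars \<Gamma> = (\<Union>(s, t)\<in>\<Gamma>. vars_trm s \<union> vars_trm t)"

definition wf_ids :: "('f \<Rightarrow> nat) \<Rightarrow> ('f trm \<times> 'f trm) set \<Rightarrow> bool" where
  "wf_ids ar \<Gamma> = (\<forall>(s, t)\<in>\<Gamma>. wf_trm ar s \<and> wf_trm ar t)"

type_synonym ('f, 'a) alg = "'a set \<times> ('f \<Rightarrow> 'a list \<Rightarrow> 'a)"

definition is_alg :: "('f \<Rightarrow> nat) \<Rightarrow> ('f, 'a) alg \<Rightarrow> bool" where
  "is_alg ar \<A> = (fst \<A> \<noteq> {} \<and>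
     (\<forall>f as. length as = ar f \<and> set as \<subseteq> fst \<A> \<longrightarrow> snd \<A> f as \<in> fst \<A>))"

fun eval :: "('f \<Rightarrow> 'a list \<Rightarrow> 'a) \<Rightarrow> (nat \<Rightarrow> 'a) \<Rightarrow> 'f trm \<Rightarrow> 'a" where
  "eval I v (Var x) = v x"
| "eval I v (Fun f ts) = I f (map (eval I v) ts)"

definition sat :: "('f, 'a) alg \<Rightarrow> 'f trm \<Rightarrow> 'f trm \<Rightarrow> bool" where
  "sat \<A> s t = (\<forall>v. (\<forall>x. v x \<in> fst \<A>) \<longrightarrow> eval (snd \<A>) v s = eval (snd \<A>) v t)"

definition Mod :: "('f \<Rightarrow> nat) \<Rightarrow> ('f trm \<times> 'f trm) set \<Rightarrow> ('f, 'a) alg set" where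
  "Mod ar E = {\<A>. is_alg ar \<A> \<and> (\<forall>(s, t)\<in>E. sat \<A> s t)}"

definition equational_class :: "('f \<Rightarrow> nat) \<Rightarrow> ('f, 'a) alg set \<Rightarrow> bool" where
  "equational_class ar V = (\<exists>E. wf_ids ar E \<and> V = Mod ar E)"

definition valid :: "('f, 'a) alg set \<Rightarrow> 'f trm \<Rightarrow> 'f trm \<Rightarrow> bool" where
  "valid V s t = (\<forall>\<A>\<in>V. sat \<A> s t)"

text \<open>A substitution over X: a homomorphism Fm(X) \<rightarrow> Fm(omega), represented by its values on
  X (well-formed terms); outside X it is normalised to the identity, so that representations
  correspond bijectively to substitutions over X.\<close>
definition subst_over :: "('f \<Rightarrow> nat) \<Rightarrow> nat set \<Rightarrow> (nat \<Rightarrow> 'f trm) \<Rightarrow> bool" where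
  "subst_over ar X \<sigma> = ((\<forall>x\<in>X. wf_trm ar (\<sigma> x)) \<and> (\<forall>x. x \<notin> X \<longrightarrow> \<sigma> x = Var x))"

definition unifies :: "('f, 'a) alg set \<Rightarrow> (nat \<Rightarrow> 'f trm) \<Rightarrow> ('f trm \<times> 'f trm) set \<Rightarrow> bool" where
  "unifies V \<sigma> \<Gamma> = (\<forall>(s, t)\<in>\<Gamma>. valid V (subst \<sigma> s) (subst \<sigma> t))"

text \<open>V-unifiers of \<Gamma> over X, where Var(\<Gamma>) \<subseteq> X: the carrier of E_V(\<Gamma>, X).\<close>
definition unifiers :: "('f \<Rightarrow> nat) \<Rightarrow> ('f, 'a) alg set \<Rightarrow> ('f trm \<times> 'f trm) set \<Rightarrow> nat set
    \<Rightarrow> (nat \<Rightarrow> 'f trm) set" where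
  "unifiers ar V \<Gamma> X = {\<sigma>. Vars \<Gamma> \<subseteq> X \<and> subst_over ar X \<sigma> \<and> unifies V \<sigma> \<Gamma>}"

definition admissible :: "('f \<Rightarrow> nat) \<Rightarrow> ('f, 'a) alg set \<Rightarrow> ('f trm \<times> 'f trm) set
    \<Rightarrow> ('f trm \<times> 'f trm) set \<Rightarrow> bool" where
  "admissible ar V \<Sigma> \<Delta> = (\<forall>\<sigma>. subst_over ar (Vars (\<Sigma> \<union> \<Delta>)) \<sigma> \<and> unifies V \<sigma> \<Sigma>
      \<longrightarrow> (\<exists>\<delta>\<in>\<Delta>. unifies V \<sigma> {\<delta>}))"

text \<open>\<sigma>2 \<sqsubseteq>_V \<sigma>1 iff ker(h_V \<circ> \<sigma>1) \<subseteq> ker(h_V \<circ> \<sigma>2), kernels taken on Fm(X), using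
  h_V(\<phi>) = h_V(\<psi>) iff V \<Turnstile> \<phi> \<approx> \<psi>.\<close>
definition sub_leq :: "('f \<Rightarrow> nat) \<Rightarrow> ('f, 'a) alg set \<Rightarrow> nat set
    \<Rightarrow> (nat \<Rightarrow> 'f trm) \<Rightarrow> (nat \<Rightarrow> 'f trm) \<Rightarrow> bool" where
  "sub_leq ar V X \<sigma>2 \<sigma>1 = (\<forall>\<phi>\<in>Fm ar X. \<forall>\<psi>\<in>Fm ar X.
      valid V (subst \<sigma>1 \<phi>) (subst \<sigma>1 \<psi>) \<longrightarrow> valid V (subst \<sigma>2 \<phi>) (subst \<sigma>2 \<psi>))"

definition complete_set :: "'b set \<Rightarrow> ('b \<Rightarrow> 'b \<Rightarrow> bool) \<Rightarrow> 'b set \<Rightarrow> bool" where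
  "complete_set P le M = (M \<subseteq> P \<and> (\<forall>x\<in>P. \<exists>y\<in>M. le x y))"

end

theory Submission
  imports Defs
begin

text \<open>Every unifier of \<Sigma> lies below some member s of the complete set S, and s, being a
  unifier, unifies some identity \<delta>_s of \<Delta> by admissibility. Lying below s means inheriting
  all identities unified by s, so every unifier of \<Sigma> unifies some \<delta>_s; thus
  \<Delta>' = {\<delta>_s | s \<in> S} works.\<close>

lemma Vars_mono: "A \<subseteq> B \<Longrightarrow> Vars A \<subseteq> Vars B"
  unfolding Vars_def by (rule UN_mono) auto

lemma subst_over_mono: "X \<subseteq> Y \<Longrightarrow> subst_over ar X \<sigma> \<Longrightarrow> subst_over ar Y \<sigma>"
  unfolding subst_over_def by (metis subsetD wf_trm.simps(1))

lemma Fm_if_wf_ids: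
  assumes "wf_ids ar \<Gamma>" "Vars \<Gamma> \<subseteq> X" "(s, t) \<in> \<Gamma>"
  shows "s \<in> Fm ar X" "t \<in> Fm ar X"
  using assms unfolding wf_ids_def Vars_def Fm_def by fast+

lemma sub_leq_unifies:
  assumes "sub_leq ar V X \<sigma> \<tau>" "wf_ids ar \<Gamma>" "Vars \<Gamma> \<subseteq> X" "unifies V \<tau> \<Gamma>"
  shows "unifies V \<sigma> \<Gamma>"
  unfolding unifies_def
proof (intro ballI, clarify)
  fix s t assume st: "(s, t) \<in> \<Gamma>"
  have "valid V (subst \<tau> s) (subst \<tau> t)" using assms(4) st unfolding unifies_def by blast
  with assms(1) show "valid V (subst \<sigma> s) (subst \<sigma> t)"
    using Fm_if_wf_ids[OF assms(2,3) st] unfolding sub_leq_def by blast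
qed

lemma admissible_unifiers:
  assumes "admissible ar V \<Sigma> \<Delta>" "\<sigma> \<in> unifiers ar V \<Sigma> (Vars (\<Sigma> \<union> \<Delta>))"
  shows "\<exists>\<delta>\<in>\<Delta>. unifies V \<sigma> {\<delta>}"
  using assms unfolding admissible_def unifiers_def by blast

text \<open>Unifiers over the variables of the smaller clause are also unifiers over those of the
  larger one, since substitutions over X are normalised to the identity outside X.\<close>

lemma admissible_if_complete_set_covered:
  assumes complete: "complete_set (unifiers ar V \<Sigma> (Vars (\<Sigma> \<union> \<Delta>)))
           (sub_leq ar V (Vars (\<Sigma> \<union> \<Delta>))) S"
    and "wf_ids ar \<Delta>" and "\<Delta>' \<subseteq> \<Delta>"
    and covered: "\<forall>s\<in>S. \<exists>\<delta>\<in>\<Delta>'. unifies V s {\<delta>}"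
  shows "admissible ar V \<Sigma> \<Delta>'"
  unfolding admissible_def
proof (intro allI impI, elim conjE)
  let ?X = "Vars (\<Sigma> \<union> \<Delta>)"
  fix \<sigma> assume "subst_over ar (Vars (\<Sigma> \<union> \<Delta>')) \<sigma>" and "unifies V \<sigma> \<Sigma>"
  moreover have "Vars (\<Sigma> \<union> \<Delta>') \<subseteq> ?X"
    using \<open>\<Delta>' \<subseteq> \<Delta>\<close> by (intro Vars_mono) blast
  moreover have "Vars \<Sigma> \<subseteq> ?X" by (intro Vars_mono) blast
  ultimately have "\<sigma> \<in> unifiers ar V \<Sigma> ?X"
    unfolding unifiers_def using subst_over_mono by blast
  then obtain s where "s \<in> S" and below: "sub_leq ar V ?X \<sigma> s"
    using complete unfolding complete_set_def by blast
  then obtain \<delta> where "\<delta> \<in> \<Delta>'" and "unifies V s {\<delta>}" using covered by blast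
  moreover have "wf_ids ar {\<delta>}"
    using \<open>\<delta> \<in> \<Delta>'\<close> \<open>\<Delta>' \<subseteq> \<Delta>\<close> \<open>wf_ids ar \<Delta>\<close> unfolding wf_ids_def by blast
  moreover have "Vars {\<delta>} \<subseteq> ?X"
    using \<open>\<delta> \<in> \<Delta>'\<close> \<open>\<Delta>' \<subseteq> \<Delta>\<close> by (intro Vars_mono) blast
  ultimately show "\<exists>\<delta>\<in>\<Delta>'. unifies V \<sigma> {\<delta>}"
    using sub_leq_unifies[OF below] by blast
qed

theorem proposition3p3:
  fixes ar :: "'f \<Rightarrow> nat"
    and V :: "('f, 'a) alg set"
    and \<Sigma> \<Delta> :: "('f trm \<times> 'f trm) set"
    and S :: "(nat \<Rightarrow> 'f trm) set"
  assumes "finite (UNIV :: 'f set)"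
    and "infinite (UNIV :: 'a set)"
    and "equational_class ar V"
    and "finite \<Sigma>" and "finite \<Delta>" and "wf_ids ar \<Sigma>" and "wf_ids ar \<Delta>"
    and "admissible ar V \<Sigma> \<Delta>"
    and "finite S"
    and "complete_set (unifiers ar V \<Sigma> (Vars (\<Sigma> \<union> \<Delta>)))
           (sub_leq ar V (Vars (\<Sigma> \<union> \<Delta>))) S"
  shows "\<exists>\<Delta>'\<subseteq>\<Delta>. card \<Delta>' \<le> card S \<and> admissible ar V \<Sigma> \<Delta>'"
proof -
  have "\<forall>s\<in>S. \<exists>\<delta>. \<delta> \<in> \<Delta> \<and> unifies V s {\<delta>}"
    using admissible_unifiers[OF assms(8)] assms(10) unfolding complete_set_def by blast
  then obtain d where d: "\<forall>s\<in>S. d s \<in> \<Delta> \<and> unifies V s {d s}"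
    by (rule bchoice[THEN exE])
  then have "d ` S \<subseteq> \<Delta>" by blast
  moreover have "admissible ar V \<Sigma> (d ` S)"
    using d by (intro admissible_if_complete_set_covered[OF assms(10,7) \<open>d ` S \<subseteq> \<Delta>\<close>]) blast
  moreover have "card (d ` S) \<le> card S" by (rule card_image_le[OF assms(9)])
  ultimately show ?thesis by blast
qed

end
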